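(* Let $\mathsf Y$ be a locally compact, separable metric space with its Borel $\sigma$-algebra and a measure $\nu$, and let $f_Y$ be a probability density on $\mathsf Y$ with respect to $\nu$. Let $G$ be a locally compact, separable metric topological group with identity $e$ and left-Haar measure $\omega_l$, acting continuously on the left of $\mathsf Y$ via $(g,y)\mapsto gy$ (so $ey=y$ and $(g_1g_2)y=g_1(g_2y)$). Let $\chi:G\to(0,\infty)$ be a multiplier such that $\nu$ is relatively left invariant with multiplier $\chi$. Suppose $m(y)=\int_G f_Y(gy)\chi(g)\omega_l(dg)$ is positive for all $y\in\mathsf Y$ and finite for $\nu$-almost all $y$. Let $R:L^2_0(f_Y)\to L^2_0(f_Y)$ be the operator $$(Rh)(y)=\frac{1}{m(y)}\int_G h(gy)f_Y(gy)\chi(g)\,\omega_l(dg).$$ If $\|R\|=1$, then $R$ is a projection onto the space of functions invariant under the group action; that is, $h\in L^2_0(f_Y)$ is in the range of $R$ if and only if $h(gy)=h(y)$ for all $g\in G$ and all $y\in\mathsf Y$.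
   Context: A multiplier is a continuous function $\chi:G\to(0,\infty)$ with $\chi(g_1g_2)=\chi(g_1)\chi(g_2)$ for all $g_1,g_2\in G$. The measure $\nu$ is relatively (left) invariant with multiplier $\chi$ if $\chi(g)\int_{\mathsf Y}\phi(gy)\nu(dy)=\int_{\mathsf Y}\phi(y)\nu(dy)$ for all $g\in G$ and all integrable $\phi$. $L^2_0(f_Y)$ is the Hilbert space of real functions square integrable and of mean zero with respect to $f_Y\,d\nu$. The operator $R$ is a self-adjoint, idempotent Markov operator on $L^2_0(f_Y)$. *)

theory Defs
  imports "HOL-Probability.Probability"
begin

(* The group G is a type 'g of class topological_group_add (a possibly
   NON-commutative group written additively: 0 = identity e, g1 + g2 = g1 g2). *)

definition left_haar_measure :: "'g::{topological_group_add,metric_space} measure \<Rightarrow> bool" where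
  "left_haar_measure \<omega> \<longleftrightarrow>
     sets \<omega> = sets borel \<and>
     (\<forall>K. compact K \<longrightarrow> emeasure \<omega> K < \<infinity>) \<and>
     (\<forall>U. open U \<and> U \<noteq> {} \<longrightarrow> emeasure \<omega> U > 0) \<and>
     (\<forall>g A. A \<in> sets borel \<longrightarrow> emeasure \<omega> ((\<lambda>x. g + x) ` A) = emeasure \<omega> A)"

definition multiplier :: "('g::{topological_group_add,metric_space} \<Rightarrow> real) \<Rightarrow> bool" where
  "multiplier chi \<longleftrightarrow> continuous_on UNIV chi \<and> (\<forall>g. chi g > 0) \<and>
     (\<forall>g1 g2. chi (g1 + g2) = chi g1 * chi g2)"

definition rel_left_invariant ::
  "'y measure \<Rightarrow> ('g \<Rightarrow> 'y \<Rightarrow> 'y) \<Rightarrow> ('g \<Rightarrow> real) \<Rightarrow> bool" where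
  "rel_left_invariant \<nu> act chi \<longleftrightarrow>
     (\<forall>g \<phi>. integrable \<nu> (\<phi> :: 'y \<Rightarrow> real) \<longrightarrow>
        integrable \<nu> (\<lambda>y. \<phi> (act g y)) \<and>
        chi g * (\<integral>y. \<phi> (act g y) \<partial>\<nu>) = (\<integral>y. \<phi> y \<partial>\<nu>))"

definition L20 :: "'y measure \<Rightarrow> ('y \<Rightarrow> real) \<Rightarrow> ('y \<Rightarrow> real) set" where
  "L20 \<nu> f = {h. h \<in> borel_measurable \<nu> \<and>
      integrable (density \<nu> f) (\<lambda>y. (h y)\<^sup>2) \<and>
      integrable (density \<nu> f) h \<and> (\<integral>y. h y \<partial>density \<nu> f) = 0}"

definition L2norm_sq :: "'y measure \<Rightarrow> ('y \<Rightarrow> real) \<Rightarrow> ('y \<Rightarrow> real) \<Rightarrow> ennreal" where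
  "L2norm_sq \<nu> f h = (\<integral>\<^sup>+ y. ennreal ((h y)\<^sup>2) \<partial>density \<nu> f)"

text \<open>Squared operator norm of an operator on L^2_0(f_Y); it equals 1 iff the norm equals 1.\<close>
definition opnorm_sq ::
  "'y measure \<Rightarrow> ('y \<Rightarrow> real) \<Rightarrow> (('y \<Rightarrow> real) \<Rightarrow> ('y \<Rightarrow> real)) \<Rightarrow> ennreal" where
  "opnorm_sq \<nu> f T = (SUP h \<in> {h \<in> L20 \<nu> f. L2norm_sq \<nu> f h \<le> 1}. L2norm_sq \<nu> f (T h))"

definition m_fun ::
  "'g measure \<Rightarrow> ('g \<Rightarrow> 'y \<Rightarrow> 'y) \<Rightarrow> ('y \<Rightarrow> real) \<Rightarrow> ('g \<Rightarrow> real) \<Rightarrow> 'y \<Rightarrow> ennreal" where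
  "m_fun \<omega> act f chi y = (\<integral>\<^sup>+ g. ennreal (f (act g y) * chi g) \<partial>\<omega>)"

text \<open>(R h)(y) = (1/m(y)) int_G h(gy) f(gy) chi(g) omega(dg); where m(y) = infinity
  (a nu-null set) the value is 0 by the convention 1/0 = 0 on reals.\<close>
definition R_op ::
  "'g measure \<Rightarrow> ('g \<Rightarrow> 'y \<Rightarrow> 'y) \<Rightarrow> ('y \<Rightarrow> real) \<Rightarrow> ('g \<Rightarrow> real) \<Rightarrow> ('y \<Rightarrow> real) \<Rightarrow> 'y \<Rightarrow> real" where
  "R_op \<omega> act f chi h y =
     (1 / enn2real (m_fun \<omega> act f chi y)) * (\<integral>g. h (act g y) * f (act g y) * chi g \<partial>\<omega>)"

end

theory Submission
  imports Defs
begin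

text \<open>For every \<open>h\<close>, \<open>R h\<close> is constant on orbits: the substitution \<open>g \<mapsto> g g\<^sub>0\<close> in the two
  integrals defining \<open>(R h)(g\<^sub>0 y)\<close> multiplies both by \<open>\<chi>(g\<^sub>0\<^sup>-\<^sup>1) \<Delta>(g\<^sub>0)\<close>, where \<open>\<Delta>\<close> is the
  modular function. It exists because a right translate of a left Haar measure is again left
  invariant, and left-invariant measures are proportional by Weil's Fubini argument.
  Conversely, let \<open>h\<close> agree almost everywhere with an invariant function. Relative invariance
  of \<open>\<nu>\<close> makes null sets invariant under each \<open>g\<close>, and Fubini turns "for every \<open>g\<close>, for almost
  every \<open>y\<close>" into "for almost every \<open>y\<close>, for almost every \<open>g\<close>". Hence for almost every \<open>y\<close>
  the integrand \<open>h(g y)\<close> equals \<open>h(y)\<close> wherever \<open>f(g y) > 0\<close>, and \<open>R h = h\<close>.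
  So the range of \<open>R\<close> consists of the invariant functions whatever its norm.\<close>

lemma borel_measurable_add_left [measurable]:
  "(\<lambda>x::'g::topological_group_add. z + x) \<in> borel_measurable borel"
  by (intro borel_measurable_continuous_onI continuous_intros)

lemma borel_measurable_add_right [measurable]:
  "(\<lambda>x::'g::topological_group_add. x + z) \<in> borel_measurable borel"
  by (intro borel_measurable_continuous_onI continuous_intros)

lemma borel_measurable_uminus_group [measurable]:
  "(uminus :: 'g::topological_group_add \<Rightarrow> 'g) \<in> borel_measurable borel"
  by (intro borel_measurable_continuous_onI continuous_intros)

definition left_invariant :: "'g::topological_group_add measure \<Rightarrow> bool" where
  "left_invariant \<mu> \<longleftrightarrow> (\<forall>z (w::'g \<Rightarrow> ennreal). w \<in> borel_measurable borel \<longrightarrow>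
      (\<integral>\<^sup>+x. w (z + x) \<partial>\<mu>) = (\<integral>\<^sup>+x. w x \<partial>\<mu>))"

lemma left_haar_measure_left_invariant:
  fixes \<omega> :: "'g::{topological_group_add,metric_space} measure"
  assumes haar: "left_haar_measure \<omega>"
  shows "left_invariant \<omega>"
  unfolding left_invariant_def
proof (intro allI impI)
  fix z and w :: "'g \<Rightarrow> ennreal"
  assume w: "w \<in> borel_measurable borel"
  have sets: "sets \<omega> = sets borel" using haar by (simp add: left_haar_measure_def)
  have mz: "(\<lambda>x. z + x) \<in> measurable \<omega> borel"
    using measurable_cong_sets[OF sets refl] borel_measurable_add_left by blast
  have "distr \<omega> borel (\<lambda>x. z + x) = \<omega>"
  proof (rule measure_eqI)
    fix A assume "A \<in> sets (distr \<omega> borel ((+) z))"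
    then have A: "A \<in> sets borel" by simp
    have "(\<lambda>x. z + x) -` A \<inter> space \<omega> = (\<lambda>x. -z + x) ` A"
      using sets_eq_imp_space_eq[OF sets]
      by (auto simp: image_iff add.assoc[symmetric]) (metis minus_add_cancel)
    then show "emeasure (distr \<omega> borel ((+) z)) A = emeasure \<omega> A"
      using haar A mz by (simp add: emeasure_distr left_haar_measure_def)
  qed (simp add: sets)
  moreover have "(\<integral>\<^sup>+x. w x \<partial>distr \<omega> borel (\<lambda>x. z + x)) = (\<integral>\<^sup>+x. w (z + x) \<partial>\<omega>)"
    by (rule nn_integral_distr[OF mz]) (simp add: w)
  ultimately show "(\<integral>\<^sup>+x. w (z + x) \<partial>\<omega>) = (\<integral>\<^sup>+x. w x \<partial>\<omega>)" by simp
qed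

lemma locally_compact_space_compact_nhd:
  fixes x :: "'a::topological_space"
  assumes "locally_compact_space (euclidean :: 'a topology)"
  obtains U K where "open U" "compact K" "x \<in> U" "U \<subseteq> K"
  using assms unfolding locally_compact_space_def
  by (metis UNIV_I open_openin topspace_euclidean compactin_euclidean_iff)

lemma sigma_finite_measure_locally_compact:
  fixes M :: "'a::{t2_space,second_countable_topology} measure"
  assumes lc: "locally_compact_space (euclidean :: 'a topology)"
    and sets: "sets M = sets borel"
    and fin: "\<And>K. compact K \<Longrightarrow> emeasure M K < \<infinity>"
  shows "sigma_finite_measure M"
proof
  let ?F = "{U::'a set. open U \<and> (\<exists>K. compact K \<and> U \<subseteq> K)}"
  have "x \<in> \<Union>?F" for x
  proof -
    obtain U K where "open U" "compact K" "x \<in> U" "U \<subseteq> K"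
      using locally_compact_space_compact_nhd[OF lc] .
    then show ?thesis by blast
  qed
  then have cover: "\<Union>?F = UNIV" by blast
  obtain F' where F': "F' \<subseteq> ?F" "countable F'" "\<Union>F' = \<Union>?F"
    using Lindelof[of ?F] by blast
  show "\<exists>A. countable A \<and> A \<subseteq> sets M \<and> \<Union>A = space M \<and> (\<forall>a\<in>A. emeasure M a \<noteq> \<infinity>)"
  proof (intro exI conjI ballI)
    show "countable F'" "F' \<subseteq> sets M" "\<Union>F' = space M"
      using F' cover sets sets_eq_imp_space_eq[OF sets] by auto
    fix a assume "a \<in> F'"
    then obtain K where K: "open a" "compact K" "a \<subseteq> K" using F'(1) by blast
    have "emeasure M a \<le> emeasure M K"
      using K sets by (intro emeasure_mono) (auto intro!: borel_closed compact_imp_closed)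
    also have "\<dots> < \<infinity>" using fin K by simp
    finally show "emeasure M a \<noteq> \<infinity>" by simp
  qed
qed

lemma left_haar_measure_sigma_finite:
  fixes \<omega> :: "'g::{topological_group_add,metric_space,second_countable_topology} measure"
  assumes "locally_compact_space (euclidean :: 'g topology)" and "left_haar_measure \<omega>"
  shows "sigma_finite_measure \<omega>"
  using assms by (intro sigma_finite_measure_locally_compact) (auto simp: left_haar_measure_def)

text \<open>Fubini, after substituting \<open>y \<mapsto> x + y\<close> in the \<open>\<nu>\<close>-integral and \<open>x \<mapsto> y + x\<close> in the
  \<open>\<mu>\<close>-integral.\<close>
lemma nn_integral_mult_left_invariant:
  fixes \<mu> \<nu> :: "'g::{topological_group_add,second_countable_topology} measure"
  assumes s\<mu>: "sets \<mu> = sets borel" and s\<nu>: "sets \<nu> = sets borel"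
    and "sigma_finite_measure \<mu>" "sigma_finite_measure \<nu>"
    and l\<mu>: "left_invariant \<mu>" and l\<nu>: "left_invariant \<nu>"
    and [measurable]: "u \<in> borel_measurable borel" "v \<in> borel_measurable borel"
  shows "(\<integral>\<^sup>+x. u x \<partial>\<mu>) * (\<integral>\<^sup>+y. v y \<partial>\<nu>) = (\<integral>\<^sup>+x. v (-x) * (\<integral>\<^sup>+y. u (y + x) \<partial>\<nu>) \<partial>\<mu>)"
proof -
  interpret P: pair_sigma_finite \<mu> \<nu> using assms by (simp add: pair_sigma_finite_def)
  have mb: "measurable (\<mu> \<Otimes>\<^sub>M \<nu>) N = measurable (borel \<Otimes>\<^sub>M borel) N" for N :: "ennreal measure"
    by (rule measurable_cong_sets[OF sets_pair_measure_cong[OF s\<mu> s\<nu>] refl])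
  have m1: "case_prod (\<lambda>x y. u x * v (-x + y)) \<in> borel_measurable (\<mu> \<Otimes>\<^sub>M \<nu>)"
    and m2: "case_prod (\<lambda>x y. u (y + x) * v (-x)) \<in> borel_measurable (\<mu> \<Otimes>\<^sub>M \<nu>)"
    unfolding mb by (simp_all add: split_beta') measurable
  have shift: "(\<integral>\<^sup>+x. u x * v (-x + y) \<partial>\<mu>) = (\<integral>\<^sup>+x. u (y + x) * v (-x) \<partial>\<mu>)" for y
  proof -
    have "(\<lambda>t. u t * v (-t + y)) \<in> borel_measurable borel" by measurable
    from l\<mu>[unfolded left_invariant_def, rule_format, OF this, of y]
    show ?thesis by (simp add: minus_add add.assoc)
  qed
  have "(\<integral>\<^sup>+x. u x \<partial>\<mu>) * (\<integral>\<^sup>+y. v y \<partial>\<nu>) = (\<integral>\<^sup>+x. u x * (\<integral>\<^sup>+y. v (-x + y) \<partial>\<nu>) \<partial>\<mu>)"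
    using l\<nu> by (simp add: left_invariant_def nn_integral_multc measurable_cong_sets[OF s\<mu> refl])
  also have "\<dots> = (\<integral>\<^sup>+x. \<integral>\<^sup>+y. u x * v (-x + y) \<partial>\<nu> \<partial>\<mu>)"
    by (intro nn_integral_cong nn_integral_cmult[symmetric]) (simp add: measurable_cong_sets[OF s\<nu> refl])
  also have "\<dots> = (\<integral>\<^sup>+y. \<integral>\<^sup>+x. u (y + x) * v (-x) \<partial>\<mu> \<partial>\<nu>)"
    using P.Fubini'[OF m1] by (simp add: shift)
  also have "\<dots> = (\<integral>\<^sup>+x. \<integral>\<^sup>+y. u (y + x) * v (-x) \<partial>\<nu> \<partial>\<mu>)"
    using P.Fubini'[OF m2] by simp
  also have "\<dots> = (\<integral>\<^sup>+x. v (-x) * (\<integral>\<^sup>+y. u (y + x) \<partial>\<nu>) \<partial>\<mu>)"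
  proof (intro nn_integral_cong)
    fix x
    have "(\<lambda>y. u (y + x)) \<in> borel_measurable borel" by measurable
    then have "(\<lambda>y. u (y + x)) \<in> borel_measurable \<nu>"
      using measurable_cong_sets[OF s\<nu> refl] by blast
    then show "(\<integral>\<^sup>+y. u (y + x) * v (-x) \<partial>\<nu>) = v (-x) * (\<integral>\<^sup>+y. u (y + x) \<partial>\<nu>)"
      by (simp add: nn_integral_cmult mult.commute[of _ "v (-x)"])
  qed
  finally show ?thesis .
qed

text \<open>Uniqueness of left-invariant measures up to a factor (Weil's argument): writing
  \<open>w x = v (-x) * \<mu>{y. y + x \<in> U}\<close>, the previous lemma gives \<open>\<integral>w d\<rho> = \<rho> U * \<integral>v d\<mu>\<close>
  for both \<open>\<rho> = \<mu>\<close> and \<open>\<rho> = \<kappa>\<close>.\<close>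
lemma left_invariant_measures_proportional:
  fixes \<mu> \<kappa> :: "'g::{topological_group_add,second_countable_topology} measure"
  assumes s\<mu>: "sets \<mu> = sets borel" and s\<kappa>: "sets \<kappa> = sets borel"
    and sf\<mu>: "sigma_finite_measure \<mu>" and sf\<kappa>: "sigma_finite_measure \<kappa>"
    and l\<mu>: "left_invariant \<mu>" and l\<kappa>: "left_invariant \<kappa>"
    and U[measurable]: "U \<in> sets borel"
    and translate_pos: "\<And>x. 0 < emeasure \<mu> {y. y + x \<in> U}"
    and translate_fin: "\<And>x. emeasure \<mu> {y. y + x \<in> U} < \<infinity>"
    and w[measurable]: "w \<in> borel_measurable borel"
  shows "emeasure \<mu> U * (\<integral>\<^sup>+x. w x \<partial>\<kappa>) = emeasure \<kappa> U * (\<integral>\<^sup>+x. w x \<partial>\<mu>)"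
proof -
  define \<phi> where "\<phi> x = (\<integral>\<^sup>+y. indicator U (y + x) \<partial>\<mu>)" for x
  have \<phi>_eq: "\<phi> x = emeasure \<mu> {y. y + x \<in> U}" for x
  proof -
    have "{y. y + x \<in> U} \<in> sets \<mu>" unfolding s\<mu> by measurable
    moreover have "(\<lambda>y. indicator U (y + x) :: ennreal) = indicator {y. y + x \<in> U}"
      by (auto simp: indicator_def)
    ultimately show ?thesis unfolding \<phi>_def by simp
  qed
  have [measurable]: "\<phi> \<in> borel_measurable borel"
  proof -
    have mb: "measurable (borel \<Otimes>\<^sub>M \<mu>) N = measurable (borel \<Otimes>\<^sub>M borel) N" for N :: "ennreal measure"
      by (rule measurable_cong_sets[OF sets_pair_measure_cong[OF refl s\<mu>] refl])
    have "case_prod (\<lambda>x y. indicator U (y + x) :: ennreal) \<in> borel_measurable (borel \<Otimes>\<^sub>M \<mu>)"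
      unfolding mb by (simp add: split_beta') measurable
    from sigma_finite_measure.borel_measurable_nn_integral[OF sf\<mu> this]
    show ?thesis unfolding \<phi>_def[abs_def] .
  qed
  define v where "v t = w (-t) / \<phi> (-t)" for t
  have [measurable]: "v \<in> borel_measurable borel" unfolding v_def[abs_def] by measurable
  have w_eq: "w x = v (-x) * \<phi> x" for x
    using translate_pos[of x] translate_fin[of x]
    by (simp add: v_def \<phi>_eq ennreal_divide_times ennreal_divide_self)
  have integral_w: "(\<integral>\<^sup>+x. w x \<partial>\<rho>) = emeasure \<rho> U * (\<integral>\<^sup>+x. v x \<partial>\<mu>)"
    if "\<rho> \<in> {\<mu>, \<kappa>}" for \<rho>
  proof -
    have "sets \<rho> = sets borel" "sigma_finite_measure \<rho>" "left_invariant \<rho>"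
      using that s\<mu> s\<kappa> sf\<mu> sf\<kappa> l\<mu> l\<kappa> by auto
    from nn_integral_mult_left_invariant[OF this(1) s\<mu> this(2) sf\<mu> this(3) l\<mu>, of "indicator U" v]
    show ?thesis
      using \<open>sets \<rho> = sets borel\<close> by (simp add: \<phi>_def[symmetric] w_eq[symmetric])
  qed
  show ?thesis by (simp add: integral_w ac_simps)
qed

lemma vimage_add_right_eq_image: "(\<lambda>y. y + a) -` K = (\<lambda>y. y + -a) ` (K :: 'g::group_add set)"
proof (intro set_eqI iffI)
  fix x assume "x \<in> (\<lambda>y. y + a) -` K"
  then show "x \<in> (\<lambda>y. y + -a) ` K" by (intro image_eqI[of _ _ "x + a"]) (simp_all add: add.assoc)
qed (auto simp: add.assoc)

lemma left_haar_measure_translate_pos_fin: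
  fixes \<omega> :: "'g::{topological_group_add,metric_space,second_countable_topology} measure"
  assumes lc: "locally_compact_space (euclidean :: 'g topology)" and haar: "left_haar_measure \<omega>"
  obtains U where "U \<in> sets borel"
    "\<And>a. 0 < emeasure \<omega> {y. y + a \<in> U}" "\<And>a. emeasure \<omega> {y. y + a \<in> U} < \<infinity>"
proof -
  have sets: "sets \<omega> = sets borel"
    and compact_fin: "\<And>K. compact K \<Longrightarrow> emeasure \<omega> K < \<infinity>"
    and open_pos: "\<And>U. open U \<Longrightarrow> U \<noteq> {} \<Longrightarrow> 0 < emeasure \<omega> U"
    using haar by (auto simp: left_haar_measure_def)
  obtain U K where U: "open U" "compact K" "(0::'g) \<in> U" "U \<subseteq> K"
    using locally_compact_space_compact_nhd[OF lc] .
  show ?thesis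
  proof
    show "U \<in> sets borel" using U by simp
    fix a :: 'g
    show "0 < emeasure \<omega> {y. y + a \<in> U}"
    proof (rule open_pos)
      show "open {y. y + a \<in> U}"
        using continuous_open_vimage[OF U(1), of "\<lambda>y. y + a"] by (simp add: vimage_def continuous_intros)
      have "-a + a \<in> U" using U by simp
      then show "{y. y + a \<in> U} \<noteq> {}" by blast
    qed
    have K_translate: "compact ((\<lambda>y. y + -a) ` K)"
      by (intro compact_continuous_image continuous_intros U(2))
    have "{y. y + a \<in> U} \<subseteq> (\<lambda>y. y + -a) ` K"
      using U(4) vimage_add_right_eq_image[of a K] by auto
    moreover have "(\<lambda>y. y + -a) ` K \<in> sets \<omega>"
      using K_translate sets by (metis borel_closed compact_imp_closed)
    ultimately have "emeasure \<omega> {y. y + a \<in> U} \<le> emeasure \<omega> ((\<lambda>y. y + -a) ` K)"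
      by (rule emeasure_mono)
    also have "\<dots> < \<infinity>" using compact_fin[OF K_translate] .
    finally show "emeasure \<omega> {y. y + a \<in> U} < \<infinity>" .
  qed
qed

lemma left_invariant_distr_add_right:
  fixes \<mu> :: "'g::{topological_group_add,second_countable_topology} measure"
  assumes sets: "sets \<mu> = sets borel" and "left_invariant \<mu>"
  shows "left_invariant (distr \<mu> borel (\<lambda>x. x + g))"
  unfolding left_invariant_def
proof (intro allI impI)
  fix z and w :: "'g \<Rightarrow> ennreal" assume [measurable]: "w \<in> borel_measurable borel"
  have mg: "(\<lambda>x. x + g) \<in> measurable \<mu> borel"
    using measurable_cong_sets[OF sets refl] borel_measurable_add_right by blast
  have "(\<lambda>t. w (t + g)) \<in> borel_measurable borel" by measurable
  from \<open>left_invariant \<mu>\<close>[unfolded left_invariant_def, rule_format, OF this, of z]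
  show "(\<integral>\<^sup>+x. w (z + x) \<partial>distr \<mu> borel (\<lambda>x. x + g)) = (\<integral>\<^sup>+x. w x \<partial>distr \<mu> borel (\<lambda>x. x + g))"
    using mg by (simp add: nn_integral_distr add.assoc)
qed

lemma left_haar_measure_distr_add_right_sigma_finite:
  fixes \<omega> :: "'g::{topological_group_add,metric_space,second_countable_topology} measure"
  assumes lc: "locally_compact_space (euclidean :: 'g topology)" and haar: "left_haar_measure \<omega>"
  shows "sigma_finite_measure (distr \<omega> borel (\<lambda>x. x + g))"
proof (rule sigma_finite_measure_locally_compact[OF lc])
  have sets: "sets \<omega> = sets borel" using haar by (simp add: left_haar_measure_def)
  then have mg: "(\<lambda>x. x + g) \<in> measurable \<omega> borel"
    using measurable_cong_sets[OF sets refl] borel_measurable_add_right by blast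
  fix K :: "'g set" assume K: "compact K"
  then have K_translate: "compact ((\<lambda>y. y + -g) ` K)"
    by (intro compact_continuous_image continuous_intros)
  have "emeasure (distr \<omega> borel (\<lambda>x. x + g)) K = emeasure \<omega> ((\<lambda>x. x + g) -` K)"
    using K mg sets_eq_imp_space_eq[OF sets] by (simp add: emeasure_distr borel_closed compact_imp_closed)
  also have "\<dots> < \<infinity>"
    using haar K_translate by (simp add: vimage_add_right_eq_image left_haar_measure_def)
  finally show "emeasure (distr \<omega> borel (\<lambda>x. x + g)) K < \<infinity>" .
qed simp

text \<open>The constant \<open>c\<close> is the modular function of the group at \<open>g\<close>.\<close>
lemma left_haar_measure_right_translate:
  fixes \<omega> :: "'g::{topological_group_add,metric_space,second_countable_topology} measure"
  assumes lc: "locally_compact_space (euclidean :: 'g topology)" and haar: "left_haar_measure \<omega>"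
  obtains c :: real where "c > 0" "distr \<omega> borel (\<lambda>x. x + g) = density \<omega> (\<lambda>_. ennreal c)"
proof -
  define L where "L = distr \<omega> borel (\<lambda>x. x + g)"
  have sets: "sets \<omega> = sets borel" using haar by (simp add: left_haar_measure_def)
  have sets_L: "sets L = sets borel" by (simp add: L_def)
  have mg: "(\<lambda>x. x + g) \<in> measurable \<omega> borel"
    using measurable_cong_sets[OF sets refl] borel_measurable_add_right by blast
  have emeasure_L: "emeasure L A = emeasure \<omega> {x. x + g \<in> A}" if "A \<in> sets borel" for A
    using that mg sets_eq_imp_space_eq[OF sets] by (simp add: L_def emeasure_distr vimage_def)
  obtain U where [measurable]: "U \<in> sets borel"
    and translate_pos: "\<And>a. 0 < emeasure \<omega> {y. y + a \<in> U}"
    and translate_fin: "\<And>a. emeasure \<omega> {y. y + a \<in> U} < \<infinity>"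
    using left_haar_measure_translate_pos_fin[OF lc haar] by blast
  have proportional: "emeasure \<omega> U * emeasure L A = emeasure L U * emeasure \<omega> A"
    if [measurable]: "A \<in> sets borel" for A
    using left_invariant_measures_proportional[OF sets sets_L left_haar_measure_sigma_finite[OF lc haar]
        left_haar_measure_distr_add_right_sigma_finite[OF lc haar, of g, folded L_def]
        left_haar_measure_left_invariant[OF haar]
        left_invariant_distr_add_right[OF sets left_haar_measure_left_invariant[OF haar], of g, folded L_def]
        _ translate_pos translate_fin, of "indicator A"] sets sets_L
    by simp
  define a where "a = enn2real (emeasure \<omega> U)"
  define b where "b = enn2real (emeasure L U)"
  have "0 < emeasure \<omega> U" "emeasure \<omega> U < \<infinity>"
    using translate_pos[of 0] translate_fin[of 0] by simp_all
  moreover have "0 < emeasure L U" "emeasure L U < \<infinity>"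
    using translate_pos[of g] translate_fin[of g] by (simp_all add: emeasure_L)
  ultimately have a: "a > 0" "emeasure \<omega> U = ennreal a" and b: "b > 0" "emeasure L U = ennreal b"
    unfolding a_def b_def by (auto simp: enn2real_positive_iff)
  show ?thesis
  proof
    show "b / a > 0" using a b by simp
    show "distr \<omega> borel (\<lambda>x. x + g) = density \<omega> (\<lambda>_. ennreal (b / a))"
    proof (rule measure_eqI)
      fix A assume "A \<in> sets (distr \<omega> borel (\<lambda>x. x + g))"
      then have A: "A \<in> sets borel" by simp
      have "ennreal a * emeasure L A = ennreal a * (ennreal (b / a) * emeasure \<omega> A)"
        using proportional[OF A] a b by (simp add: mult.assoc[symmetric] ennreal_mult[symmetric])
      then have "emeasure L A = ennreal (b / a) * emeasure \<omega> A"
        using a by (simp add: ennreal_mult_cancel_left)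
      then show "emeasure (distr \<omega> borel (\<lambda>x. x + g)) A = emeasure (density \<omega> (\<lambda>_. ennreal (b / a))) A"
        using A sets by (simp add: L_def[symmetric] emeasure_density_const)
    qed (simp add: sets)
  qed
qed

lemma left_haar_measure_right_translate_integral:
  fixes \<omega> :: "'g::{topological_group_add,metric_space,second_countable_topology} measure"
  assumes lc: "locally_compact_space (euclidean :: 'g topology)" and haar: "left_haar_measure \<omega>"
  obtains c :: real where "c > 0"
    "\<And>w. w \<in> borel_measurable borel \<Longrightarrow> (\<integral>\<^sup>+x. w (x + g) \<partial>\<omega>) = ennreal c * (\<integral>\<^sup>+x. w x \<partial>\<omega>)"
    "\<And>H :: 'g \<Rightarrow> real. H \<in> borel_measurable borel \<Longrightarrow> (LINT x|\<omega>. H (x + g)) = c * (LINT x|\<omega>. H x)"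
proof -
  obtain c where c: "c > 0" and D: "distr \<omega> borel (\<lambda>x. x + g) = density \<omega> (\<lambda>_. ennreal c)"
    using left_haar_measure_right_translate[OF lc haar] .
  have sets: "sets \<omega> = sets borel" using haar by (simp add: left_haar_measure_def)
  have mb: "F \<in> borel_measurable \<omega>" if "F \<in> borel_measurable borel" for F :: "'g \<Rightarrow> 'b::topological_space"
    using that measurable_cong_sets[OF sets refl] by blast
  show ?thesis
  proof
    show "c > 0" by fact
    fix w :: "'g \<Rightarrow> ennreal" assume w: "w \<in> borel_measurable borel"
    have "(\<integral>\<^sup>+x. w (x + g) \<partial>\<omega>) = (\<integral>\<^sup>+x. w x \<partial>distr \<omega> borel (\<lambda>x. x + g))"
      using w mb[OF borel_measurable_add_right] by (simp add: nn_integral_distr)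
    also have "\<dots> = (\<integral>\<^sup>+x. ennreal c * w x \<partial>\<omega>)"
      unfolding D by (rule nn_integral_density) (auto intro: mb[OF w])
    also have "\<dots> = ennreal c * (\<integral>\<^sup>+x. w x \<partial>\<omega>)"
      by (rule nn_integral_cmult) (rule mb[OF w])
    finally show "(\<integral>\<^sup>+x. w (x + g) \<partial>\<omega>) = ennreal c * (\<integral>\<^sup>+x. w x \<partial>\<omega>)" .
  next
    fix H :: "'g \<Rightarrow> real" assume H: "H \<in> borel_measurable borel"
    have "(LINT x|\<omega>. H (x + g)) = (LINT x|distr \<omega> borel (\<lambda>x. x + g). H x)"
      using H mb[OF borel_measurable_add_right] by (simp add: integral_distr)
    also have "\<dots> = (LINT x|\<omega>. c *\<^sub>R H x)"
      unfolding D using c by (intro integral_density) (auto intro: mb[OF H])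
    finally show "(LINT x|\<omega>. H (x + g)) = c * (LINT x|\<omega>. H x)" by simp
  qed
qed

lemma continuous_action_measurable:
  fixes act :: "'g::{topological_space,second_countable_topology} \<Rightarrow> 'y::{topological_space,second_countable_topology} \<Rightarrow> 'y"
  assumes "continuous_on UNIV (\<lambda>(g, y). act g y)"
  shows "(\<lambda>g. act g y) \<in> borel_measurable borel"
    "(\<lambda>p. act (fst p) (snd p)) \<in> borel_measurable (borel \<Otimes>\<^sub>M borel)"
proof -
  have c: "continuous_on UNIV (\<lambda>p. act (fst p) (snd p))" using assms by (simp add: split_beta')
  have "continuous_on UNIV ((\<lambda>p. act (fst p) (snd p)) \<circ> (\<lambda>g. (g, y)))"
    by (rule continuous_on_compose) (auto intro!: continuous_intros continuous_on_subset[OF c])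
  then show "(\<lambda>g. act g y) \<in> borel_measurable borel"
    by (intro borel_measurable_continuous_onI) (simp add: o_def)
  from c have "(\<lambda>p. act (fst p) (snd p)) \<in> borel_measurable borel"
    by (rule borel_measurable_continuous_onI)
  then show "(\<lambda>p. act (fst p) (snd p)) \<in> borel_measurable (borel \<Otimes>\<^sub>M borel)"
    by (simp add: borel_prod)
qed

lemma multiplier_borel_measurable:
  "multiplier chi \<Longrightarrow> chi \<in> borel_measurable borel"
  by (intro borel_measurable_continuous_onI) (simp add: multiplier_def)

text \<open>The factor \<open>k\<close> is \<open>chi (-g\<^sub>0)\<close> times the modular function at \<open>g\<^sub>0\<close>.\<close>
lemma orbit_integrals_act:
  fixes \<omega> :: "'g::{topological_group_add,metric_space,second_countable_topology} measure"
    and act :: "'g \<Rightarrow> 'y::{topological_space,second_countable_topology} \<Rightarrow> 'y"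
  assumes lc: "locally_compact_space (euclidean :: 'g topology)"
    and haar: "left_haar_measure \<omega>"
    and act_cont: "continuous_on UNIV (\<lambda>(g, y). act g y)"
    and act_comp: "\<And>g1 g2 y. act (g1 + g2) y = act g1 (act g2 y)"
    and mult: "multiplier chi"
    and [measurable]: "\<phi> \<in> borel_measurable borel" "\<psi> \<in> borel_measurable borel"
    and \<psi>_nonneg: "\<And>y. \<psi> y \<ge> 0"
  obtains k :: real where "k > 0"
    "(LINT g|\<omega>. \<phi> (act g (act g\<^sub>0 y)) * chi g) = k * (LINT g|\<omega>. \<phi> (act g y) * chi g)"
    "(\<integral>\<^sup>+g. ennreal (\<psi> (act g (act g\<^sub>0 y)) * chi g) \<partial>\<omega>)
      = ennreal k * (\<integral>\<^sup>+g. ennreal (\<psi> (act g y) * chi g) \<partial>\<omega>)"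
proof -
  note [measurable] = continuous_action_measurable[OF act_cont] multiplier_borel_measurable[OF mult]
  have chi_pos: "\<And>g. chi g > 0" and chi_add: "\<And>a b. chi (a + b) = chi a * chi b"
    using mult by (auto simp: multiplier_def)
  have chi_shift: "chi g = chi (-g\<^sub>0) * chi (g + g\<^sub>0)" for g
    using chi_add[of "g + g\<^sub>0" "-g\<^sub>0"] by (simp add: add.assoc mult.commute)
  obtain c where c: "c > 0"
    and nn_translate: "\<And>w. w \<in> borel_measurable borel \<Longrightarrow> (\<integral>\<^sup>+g. w (g + g\<^sub>0) \<partial>\<omega>) = ennreal c * (\<integral>\<^sup>+g. w g \<partial>\<omega>)"
    and translate: "\<And>H :: 'g \<Rightarrow> real. H \<in> borel_measurable borel \<Longrightarrow>
        (LINT g|\<omega>. H (g + g\<^sub>0)) = c * (LINT g|\<omega>. H g)"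
    using left_haar_measure_right_translate_integral[OF lc haar, where g = g\<^sub>0] by blast
  have shift: "F (act g (act g\<^sub>0 y)) * chi g = chi (-g\<^sub>0) * (F (act (g + g\<^sub>0) y) * chi (g + g\<^sub>0))"
    for F :: "'y \<Rightarrow> real" and g
    by (simp only: act_comp chi_shift[of g] mult_ac)
  have "(\<lambda>g. \<phi> (act g y) * chi g) \<in> borel_measurable borel" by measurable
  note translate = translate[OF this]
  have "(\<lambda>g. ennreal (\<psi> (act g y) * chi g)) \<in> borel_measurable borel" by measurable
  note nn_translate = nn_translate[OF this]
  have "(\<lambda>g. ennreal (\<psi> (act (g + g\<^sub>0) y) * chi (g + g\<^sub>0))) \<in> borel_measurable borel" by measurable
  then have \<psi>_translate_meas: "(\<lambda>g. ennreal (\<psi> (act (g + g\<^sub>0) y) * chi (g + g\<^sub>0))) \<in> borel_measurable \<omega>"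
    using haar measurable_cong_sets by (auto simp: left_haar_measure_def)
  show ?thesis
  proof
    show "chi (-g\<^sub>0) * c > 0" using chi_pos c by simp
    show "(LINT g|\<omega>. \<phi> (act g (act g\<^sub>0 y)) * chi g) = chi (-g\<^sub>0) * c * (LINT g|\<omega>. \<phi> (act g y) * chi g)"
      by (simp only: shift) (simp add: translate)
    have "(\<integral>\<^sup>+g. ennreal (\<psi> (act g (act g\<^sub>0 y)) * chi g) \<partial>\<omega>)
        = (\<integral>\<^sup>+g. ennreal (chi (-g\<^sub>0)) * ennreal (\<psi> (act (g + g\<^sub>0) y) * chi (g + g\<^sub>0)) \<partial>\<omega>)"
      using \<psi>_nonneg chi_pos by (simp only: shift) (simp add: ennreal_mult less_imp_le)
    also have "\<dots> = ennreal (chi (-g\<^sub>0)) * (\<integral>\<^sup>+g. ennreal (\<psi> (act (g + g\<^sub>0) y) * chi (g + g\<^sub>0)) \<partial>\<omega>)"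
      by (rule nn_integral_cmult[OF \<psi>_translate_meas])
    finally show "(\<integral>\<^sup>+g. ennreal (\<psi> (act g (act g\<^sub>0 y)) * chi g) \<partial>\<omega>)
        = ennreal (chi (-g\<^sub>0) * c) * (\<integral>\<^sup>+g. ennreal (\<psi> (act g y) * chi g) \<partial>\<omega>)"
      using chi_pos[of "-g\<^sub>0"] c by (simp add: nn_translate ennreal_mult mult.assoc)
  qed
qed

lemma R_op_act_invariant:
  fixes \<omega> :: "'g::{topological_group_add,metric_space,second_countable_topology} measure"
    and act :: "'g \<Rightarrow> 'y::{topological_space,second_countable_topology} \<Rightarrow> 'y"
  assumes lc: "locally_compact_space (euclidean :: 'g topology)"
    and haar: "left_haar_measure \<omega>"
    and act_cont: "continuous_on UNIV (\<lambda>(g, y). act g y)"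
    and act_comp: "\<And>g1 g2 y. act (g1 + g2) y = act g1 (act g2 y)"
    and mult: "multiplier chi"
    and f_borel[measurable]: "f \<in> borel_measurable borel"
    and [measurable]: "h \<in> borel_measurable borel"
    and f_nonneg: "\<And>y. f y \<ge> 0"
  shows "R_op \<omega> act f chi h (act g\<^sub>0 y) = R_op \<omega> act f chi h y"
proof -
  have hf_borel: "(\<lambda>z. h z * f z) \<in> borel_measurable borel" by measurable
  obtain k where k: "k > 0"
    and numerator: "(LINT g|\<omega>. h (act g (act g\<^sub>0 y)) * f (act g (act g\<^sub>0 y)) * chi g)
      = k * (LINT g|\<omega>. h (act g y) * f (act g y) * chi g)"
    and "(\<integral>\<^sup>+g. ennreal (f (act g (act g\<^sub>0 y)) * chi g) \<partial>\<omega>)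
      = ennreal k * (\<integral>\<^sup>+g. ennreal (f (act g y) * chi g) \<partial>\<omega>)"
    by (rule orbit_integrals_act[OF lc haar act_cont act_comp mult hf_borel f_borel f_nonneg])
  then have denominator:
    "enn2real (m_fun \<omega> act f chi (act g\<^sub>0 y)) = k * enn2real (m_fun \<omega> act f chi y)"
    by (simp add: m_fun_def enn2real_mult)
  define m where "m = enn2real (m_fun \<omega> act f chi y)"
  define I where "I = (LINT g|\<omega>. h (act g y) * f (act g y) * chi g)"
  have "R_op \<omega> act f chi h (act g\<^sub>0 y) = 1 / (k * m) * (k * I)"
    by (simp only: R_op_def numerator denominator m_def I_def)
  also have "\<dots> = 1 / m * I"
    using k by (cases "m = 0") (simp_all add: field_simps)
  also have "\<dots> = R_op \<omega> act f chi h y"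
    by (simp only: R_op_def m_def I_def)
  finally show ?thesis .
qed

lemma rel_left_invariant_AE_act_notin:
  fixes \<nu> :: "'y measure"
  assumes rel_inv: "rel_left_invariant \<nu> act chi" and "chi g \<noteq> 0"
    and N: "N \<in> sets \<nu>" "emeasure \<nu> N = 0"
  shows "AE y in \<nu>. act g y \<notin> N"
proof -
  have "integrable \<nu> (indicator N :: 'y \<Rightarrow> real)"
    using N by (intro integrable_real_indicator) auto
  from rel_inv[unfolded rel_left_invariant_def, rule_format, OF this, of g]
  have integrable: "integrable \<nu> (\<lambda>y. indicator N (act g y) :: real)"
    and "chi g * (LINT y|\<nu>. indicator N (act g y)) = (LINT y|\<nu>. indicator N y :: real)"
    by auto
  then have "(LINT y|\<nu>. indicator N (act g y) :: real) = 0"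
    using N \<open>chi g \<noteq> 0\<close> by (simp add: measure_def)
  then have "AE y in \<nu>. (indicator N (act g y) :: real) = 0"
    using integral_nonneg_eq_0_iff_AE[OF integrable] by simp
  then show ?thesis by (auto simp: indicator_def)
qed

lemma AE_AE_act_notin:
  fixes M :: "'y::topological_space measure" and \<omega> :: "'g::topological_space measure"
  assumes "sigma_finite_measure M" "sigma_finite_measure \<omega>"
    and sets_M: "sets M = sets borel" and sets_\<omega>: "sets \<omega> = sets borel"
    and act_meas: "(\<lambda>p. act (fst p) (snd p)) \<in> borel_measurable (borel \<Otimes>\<^sub>M borel)"
    and [measurable]: "N \<in> sets borel"
    and null: "\<And>g. AE y in M. act g y \<notin> N"
  shows "AE y in M. AE g in \<omega>. act g y \<notin> N"
proof -
  interpret pair_sigma_finite \<omega> M using assms by (simp add: pair_sigma_finite_def)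
  have sets_pair: "sets (\<omega> \<Otimes>\<^sub>M M) = sets (borel \<Otimes>\<^sub>M borel)"
    by (rule sets_pair_measure_cong[OF sets_\<omega> sets_M])
  have "{p \<in> space (borel \<Otimes>\<^sub>M borel). act (fst p) (snd p) \<notin> N} \<in> sets (borel \<Otimes>\<^sub>M borel)"
    using act_meas by measurable
  then have "{p \<in> space (\<omega> \<Otimes>\<^sub>M M). act (fst p) (snd p) \<notin> N} \<in> sets (\<omega> \<Otimes>\<^sub>M M)"
    unfolding sets_pair sets_eq_imp_space_eq[OF sets_pair] .
  moreover have "AE g in \<omega>. AE y in M. act g y \<notin> N"
    by (intro AE_I2 null)
  ultimately show ?thesis by (simp add: AE_commute)
qed

lemma R_op_eq_if_AE_invariant:
  fixes \<omega> :: "'g::topological_space measure" and act :: "'g \<Rightarrow> 'y::topological_space \<Rightarrow> 'y"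
  assumes sets: "sets \<omega> = sets borel"
    and [measurable]: "(\<lambda>g. act g y) \<in> borel_measurable borel" "f \<in> borel_measurable borel"
      "h \<in> borel_measurable borel" "chi \<in> borel_measurable borel"
    and f_nonneg: "\<And>y. f y \<ge> 0" and chi_nonneg: "\<And>g. chi g \<ge> 0"
    and m_pos: "0 < m_fun \<omega> act f chi y" and m_fin: "m_fun \<omega> act f chi y < \<infinity>"
    and invariant: "AE g in \<omega>. f (act g y) \<noteq> 0 \<longrightarrow> h (act g y) = h y"
  shows "R_op \<omega> act f chi h y = h y"
proof -
  have mb: "F \<in> borel_measurable \<omega>" if "F \<in> borel_measurable borel" for F :: "'g \<Rightarrow> 'b::topological_space"
    using that measurable_cong_sets[OF sets refl] by blast
  have "(LINT g|\<omega>. h (act g y) * f (act g y) * chi g) = (LINT g|\<omega>. h y * (f (act g y) * chi g))"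
    by (rule integral_cong_AE) (use invariant in \<open>auto intro!: mb\<close>)
  also have "\<dots> = h y * enn2real (m_fun \<omega> act f chi y)"
    unfolding m_fun_def using f_nonneg chi_nonneg
    by (subst integral_eq_nn_integral[symmetric]) (auto intro!: mb)
  finally have "(LINT g|\<omega>. h (act g y) * f (act g y) * chi g) = h y * enn2real (m_fun \<omega> act f chi y)" .
  moreover have "enn2real (m_fun \<omega> act f chi y) \<noteq> 0"
    using m_pos m_fin by (auto simp: enn2real_eq_0_iff)
  ultimately show ?thesis by (simp add: R_op_def)
qed

lemma AE_density_AE_orbit_eq:
  fixes \<nu> :: "'y::{topological_space,second_countable_topology} measure"
    and \<omega> :: "'g::{topological_group_add,metric_space,second_countable_topology} measure"
    and act :: "'g \<Rightarrow> 'y \<Rightarrow> 'y"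
  assumes G_lc: "locally_compact_space (euclidean :: 'g topology)"
    and haar: "left_haar_measure \<omega>"
    and act_meas: "(\<lambda>p. act (fst p) (snd p)) \<in> borel_measurable (borel \<Otimes>\<^sub>M borel)"
    and chi_pos: "\<And>g. chi g > 0"
    and nu_borel: "sets \<nu> = sets borel"
    and f_meas: "(\<lambda>y. ennreal (f y)) \<in> borel_measurable \<nu>"
    and f_fin: "(\<integral>\<^sup>+ y. ennreal (f y) \<partial>\<nu>) \<noteq> \<infinity>"
    and rel_inv: "rel_left_invariant \<nu> act chi"
    and h_ae: "AE y in density \<nu> f. h y = h' y"
  shows "AE y in density \<nu> f. AE g in \<omega>. 0 < f (act g y) \<longrightarrow> h (act g y) = h' (act g y)"
proof -
  have AE_density_of_AE: "AE y in density \<nu> f. P y" if "AE y in \<nu>. P y" for P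
    using that unfolding AE_density[OF f_meas] by eventually_elim simp
  obtain N where N: "{y \<in> space \<nu>. \<not> (0 < ennreal (f y) \<longrightarrow> h y = h' y)} \<subseteq> N"
    "emeasure \<nu> N = 0" "N \<in> sets \<nu>"
    using h_ae unfolding AE_density[OF f_meas] by (rule AE_E)
  have "finite_measure (density \<nu> f)"
    using f_fin f_meas by (intro finite_measureI) (simp add: emeasure_density)
  then have "AE y in density \<nu> f. AE g in \<omega>. act g y \<notin> N"
    using N(3) nu_borel left_haar_measure_sigma_finite[OF G_lc haar] haar act_meas
      rel_left_invariant_AE_act_notin[OF rel_inv _ N(3,2)] chi_pos
    by (intro AE_AE_act_notin AE_density_of_AE)
      (auto simp: finite_measure.sigma_finite_measure less_imp_neq[symmetric] left_haar_measure_def)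
  then show ?thesis
    by eventually_elim (use N(1) sets_eq_imp_space_eq[OF nu_borel] in \<open>auto elim: AE_mp\<close>)
qed

lemma R_op_fixes_AE_invariant:
  fixes \<nu> :: "'y::{topological_space,second_countable_topology} measure"
    and \<omega> :: "'g::{topological_group_add,metric_space,second_countable_topology} measure"
    and act :: "'g \<Rightarrow> 'y \<Rightarrow> 'y"
  assumes G_lc: "locally_compact_space (euclidean :: 'g topology)"
    and haar: "left_haar_measure \<omega>"
    and act_cont: "continuous_on UNIV (\<lambda>(g, y). act g y)"
    and mult: "multiplier chi"
    and nu_borel: "sets \<nu> = sets borel"
    and f_borel[measurable]: "f \<in> borel_measurable borel"
    and f_nonneg: "\<And>y. f y \<ge> 0"
    and f_prob: "(\<integral>\<^sup>+ y. ennreal (f y) \<partial>\<nu>) = 1"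
    and rel_inv: "rel_left_invariant \<nu> act chi"
    and m_pos: "\<And>y. m_fun \<omega> act f chi y > 0"
    and m_fin: "AE y in \<nu>. m_fun \<omega> act f chi y < \<infinity>"
    and h_borel[measurable]: "h \<in> borel_measurable borel"
    and h_ae: "AE y in density \<nu> f. h y = h' y"
    and h'_invariant: "\<And>g y. h' (act g y) = h' y"
  shows "AE y in density \<nu> f. R_op \<omega> act f chi h y = h y"
proof -
  note [measurable] = continuous_action_measurable[OF act_cont] multiplier_borel_measurable[OF mult]
  have chi_pos: "\<And>g. chi g > 0" using mult by (simp add: multiplier_def)
  have "(\<lambda>y. ennreal (f y)) \<in> borel_measurable borel" by measurable
  then have f_meas: "(\<lambda>y. ennreal (f y)) \<in> borel_measurable \<nu>"
    using measurable_cong_sets[OF nu_borel refl] by blast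
  have "AE y in density \<nu> f. AE g in \<omega>. 0 < f (act g y) \<longrightarrow> h (act g y) = h' (act g y)"
    using continuous_action_measurable(2)[OF act_cont] f_prob
    by (intro AE_density_AE_orbit_eq[OF G_lc haar _ chi_pos nu_borel f_meas _ rel_inv h_ae]) simp_all
  moreover have "AE y in density \<nu> f. m_fun \<omega> act f chi y < \<infinity>"
    using m_fin unfolding AE_density[OF f_meas] by eventually_elim simp
  ultimately show ?thesis
    using h_ae
  proof eventually_elim
    case (elim y)
    from elim(1) have "AE g in \<omega>. f (act g y) \<noteq> 0 \<longrightarrow> h (act g y) = h y"
      by eventually_elim (use f_nonneg h'_invariant elim(3) in \<open>auto simp: less_le\<close>)
    then show ?case
      using elim(2) m_pos haar f_nonneg chi_pos
      by (intro R_op_eq_if_AE_invariant) (auto simp: left_haar_measure_def intro: less_imp_le)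
  qed
qed

theorem lemma2:
  fixes \<nu> :: "'y::{metric_space,second_countable_topology} measure"
    and f :: "'y \<Rightarrow> real"
    and \<omega> :: "'g::{topological_group_add,metric_space,second_countable_topology} measure"
    and act :: "'g \<Rightarrow> 'y \<Rightarrow> 'y"
    and chi :: "'g \<Rightarrow> real"
  assumes Y_lc: "locally_compact_space (euclidean :: 'y topology)"
    and nu_borel: "sets \<nu> = sets borel"
    and f_meas: "f \<in> borel_measurable \<nu>"
    and f_nonneg: "\<And>y. f y \<ge> 0"
    and f_prob: "(\<integral>\<^sup>+ y. ennreal (f y) \<partial>\<nu>) = 1"
    and G_lc: "locally_compact_space (euclidean :: 'g topology)"
    and haar: "left_haar_measure \<omega>"
    and act_cont: "continuous_on UNIV (\<lambda>(g, y). act g y)"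
    and act_id: "\<And>y. act 0 y = y"
    and act_comp: "\<And>g1 g2 y. act (g1 + g2) y = act g1 (act g2 y)"
    and mult: "multiplier chi"
    and rel_inv: "rel_left_invariant \<nu> act chi"
    and m_pos: "\<And>y. m_fun \<omega> act f chi y > 0"
    and m_fin: "AE y in \<nu>. m_fun \<omega> act f chi y < \<infinity>"
    and norm_one: "opnorm_sq \<nu> f (R_op \<omega> act f chi) = 1"
  shows "\<forall>h \<in> L20 \<nu> f.
           (\<exists>h' \<in> L20 \<nu> f. AE y in density \<nu> f. h y = R_op \<omega> act f chi h' y)
           \<longleftrightarrow> (\<exists>h''. (AE y in density \<nu> f. h y = h'' y) \<and> (\<forall>g y. h'' (act g y) = h'' y))"
proof -
  have f_borel: "f \<in> borel_measurable borel"
    using f_meas measurable_cong_sets[OF nu_borel refl] by blast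
  have L20_borel: "h \<in> borel_measurable borel" if "h \<in> L20 \<nu> f" for h
    using that measurable_cong_sets[OF nu_borel refl] by (auto simp: L20_def)
  show ?thesis
  proof (intro ballI iffI)
    fix h assume "\<exists>h' \<in> L20 \<nu> f. AE y in density \<nu> f. h y = R_op \<omega> act f chi h' y"
    then obtain h' where "h' \<in> L20 \<nu> f" "AE y in density \<nu> f. h y = R_op \<omega> act f chi h' y"
      by blast
    moreover have "R_op \<omega> act f chi h' (act g y) = R_op \<omega> act f chi h' y" for g y
      by (rule R_op_act_invariant[OF G_lc haar act_cont act_comp mult f_borel L20_borel f_nonneg])
        fact
    ultimately show "\<exists>h''. (AE y in density \<nu> f. h y = h'' y) \<and> (\<forall>g y. h'' (act g y) = h'' y)"
      by blast
  next
    fix h assume h: "h \<in> L20 \<nu> f"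
      and "\<exists>h''. (AE y in density \<nu> f. h y = h'' y) \<and> (\<forall>g y. h'' (act g y) = h'' y)"
    then obtain h'' where "AE y in density \<nu> f. h y = h'' y" "\<And>g y. h'' (act g y) = h'' y"
      by blast
    then have "AE y in density \<nu> f. R_op \<omega> act f chi h y = h y"
      by (intro R_op_fixes_AE_invariant[OF G_lc haar act_cont mult nu_borel f_borel f_nonneg
            f_prob rel_inv m_pos m_fin L20_borel[OF h]])
    then have "AE y in density \<nu> f. h y = R_op \<omega> act f chi h y"
      by eventually_elim simp
    with h show "\<exists>h' \<in> L20 \<nu> f. AE y in density \<nu> f. h y = R_op \<omega> act f chi h' y"
      by blast
  qed
qed

end
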